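(* Let $\mathcal A=\mathbb N_+=\{1,2,\dots\}$, $\Omega=\mathcal A^{\mathbb N}$, and $\mathbb P$ the product measure with $\mathbb P[a_0,\dots,a_{n-1}]=\prod_{j<n}2^{-a_j}$. Let $\Omega_0=\{0,1\}^{\mathbb N}$ with σ-algebra $\mathcal F_0$ generated by cylinders and left shift $T_0$. Define $\theta(a_1,a_2)=1$ if $a_2=a_1+1$ and $0$ otherwise, $\Theta:\Omega\to\Omega_0$ by $(\Theta\omega)_j=\theta(\omega_j,\omega_{j+1})$, and $\mathbb P_0=\mathbb P\circ\Theta^{-1}$. Then (a) $\mathbb P_0$ is $T_0$-invariant; (b) $\mathbb P_0$ is ψ-mixing; (c) for $\omega\in\Omega_0$ with $\omega_j=1$ for all $j\ge0$, $\lim_{n\to\infty}\mathbb P_0(A^\omega_{n+1}\mid A^\omega_n)=0$.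
   Context: Cylinders in $\Omega_0$: $[b_0,\dots,b_{n-1}]_0=\{\omega\in\Omega_0:\omega_j=b_j,0\le j<n\}$, $A_n^\omega=[\omega_0,\dots,\omega_{n-1}]_0$. A probability $Q$ on $(\Omega_0,\mathcal F_0)$ is ψ-mixing if there is $\psi_m\ge0$, $\psi_m\to0$, with $|Q(E\cap T_0^{-(n+m)}F)-Q(E)Q(F)|\le\psi_mQ(E)Q(F)$ for all $m,n\in\mathbb N$, $E$ in the σ-algebra generated by coordinates $0,\dots,n-1$, and $F\in\mathcal F_0$. *)

theory Defs
  imports "HOL-Probability.Probability"
begin

text \<open>Single-letter law on the alphabet N_+ = {1,2,...}: P(a = k) = 2^(-k) for k >= 1.
  (geometric_pmf (1/2) gives mass (1/2)^(n+1) to n; shifting by Suc gives 2^(-k) to k.)\<close>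
definition letter_pmf :: "nat pmf" where
  "letter_pmf = map_pmf Suc (geometric_pmf (1/2))"

text \<open>The Bernoulli-type product measure P on Omega = A^N (sequences nat => nat;
  it is concentrated on sequences with all entries >= 1).\<close>
definition Pmeas :: "(nat \<Rightarrow> nat) measure" where
  "Pmeas = PiM UNIV (\<lambda>_. measure_pmf letter_pmf)"

text \<open>Omega_0 = {0,1}^N with the sigma-algebra generated by cylinders (= product sigma-algebra).\<close>
definition Omega0 :: "(nat \<Rightarrow> bool) measure" where
  "Omega0 = PiM UNIV (\<lambda>_. count_space UNIV)"

definition T0 :: "(nat \<Rightarrow> bool) \<Rightarrow> (nat \<Rightarrow> bool)" where
  "T0 \<omega> = (\<lambda>j. \<omega> (Suc j))"

definition theta :: "nat \<Rightarrow> nat \<Rightarrow> bool" where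
  "theta a1 a2 = (a2 = a1 + 1)"

definition Theta :: "(nat \<Rightarrow> nat) \<Rightarrow> (nat \<Rightarrow> bool)" where
  "Theta \<omega> = (\<lambda>j. theta (\<omega> j) (\<omega> (Suc j)))"

definition P0 :: "(nat \<Rightarrow> bool) measure" where
  "P0 = distr Pmeas Omega0 Theta"

definition cyl :: "(nat \<Rightarrow> bool) \<Rightarrow> nat \<Rightarrow> (nat \<Rightarrow> bool) set" where
  "cyl \<omega> n = {\<omega>'. \<forall>j<n. \<omega>' j = \<omega> j}"

definition coord_sigma :: "nat \<Rightarrow> (nat \<Rightarrow> bool) set set" where
  "coord_sigma n = sigma_sets UNIV {{\<omega>. \<omega> j \<in> B} | j B. j < n}"

definition psi_mixing :: "(nat \<Rightarrow> bool) measure \<Rightarrow> bool" where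
  "psi_mixing Q \<longleftrightarrow> (\<exists>\<psi> :: nat \<Rightarrow> real. (\<forall>m. \<psi> m \<ge> 0) \<and> \<psi> \<longlonglongrightarrow> 0 \<and>
     (\<forall>m n E F. E \<in> coord_sigma n \<longrightarrow> F \<in> sets Omega0 \<longrightarrow>
        \<bar>measure Q (E \<inter> (T0 ^^ (n + m)) -` F) - measure Q E * measure Q F\<bar>
          \<le> \<psi> m * measure Q E * measure Q F))"

end

theory Submission
  imports Defs
begin

(* Three facts about i.i.d. sequences carry the
   argument: the shift preserves P, and P disintegrates over its first letter and over its
   first N letters.
   (a) Theta intertwines the shifts, so shift invariance of P passes to P0.
   (c) The all-ones cylinder of length n pulls back to the runs w_{j+1} = w_j + 1 (j < n), on
       which w_n >= n + 1; extending such a run costs a letter >= n + 2, of probability at most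
       2^-(n+1).
   (b) The bits 0..n-1 only see the letters 0..n.  Conditioning on the first N > n letters, an
       event of these bits is independent of every event of the later letters, so psi_m = 0 for
       m >= 1.  For m = 0 the later block starts after the shared letter w_n, and we compare the
       law of the bit process started after a letter d >= 1 with P0: it is at most 4 P0.  This
       rests on the comparison start_law c <= 2 start_law c' for 1 <= c' <= c, proved by induction for events
       of finitely many bits and extended to all events by the monotone class theorem. *)

section \<open>Sequences of i.i.d. letters\<close>

definition shift :: "(nat \<Rightarrow> 'a) \<Rightarrow> nat \<Rightarrow> 'a" where
  "shift \<omega> = (\<lambda>j. \<omega> (Suc j))"

lemma funpow_shift: "(shift ^^ k) \<omega> = (\<lambda>j. \<omega> (j + k))"
  by (induction k arbitrary: \<omega>) (auto simp: shift_def)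

lemma funpow_shift_comb_seq:
  assumes "k \<le> N" shows "(shift ^^ k) (comb_seq N \<omega> \<omega>') = comb_seq (N - k) ((shift ^^ k) \<omega>) \<omega>'"
  using assms by (auto simp: funpow_shift comb_seq_def intro!: ext)

abbreviation iid :: "'a pmf \<Rightarrow> (nat \<Rightarrow> 'a) measure" where
  "iid p \<equiv> PiM UNIV (\<lambda>_. measure_pmf p)"

lemma space_iid[simp]: "space (iid p) = UNIV"
  by (simp add: space_PiM)

lemma prob_space_iid: "prob_space (iid p)"
  by (simp add: prob_space_PiM prob_space_measure_pmf)

lemma measurable_shift[measurable]: "shift \<in> measurable (iid p) (iid p)"
  unfolding shift_def by (rule measurable_PiM_single') simp_all

lemma emeasure_iid_split_first:
  assumes A[measurable]: "A \<in> sets (iid p)"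
  shows "emeasure (iid p) A = (\<integral>\<^sup>+d. emeasure (iid p) {\<omega>. case_nat d \<omega> \<in> A} \<partial>p)"
proof -
  interpret sequence_space "measure_pmf p" by unfold_locales
  have S: "sigma_finite_measure S" by unfold_locales
  have [measurable]: "(\<lambda>(s, \<omega>). case_nat s \<omega>) \<in> measurable (measure_pmf p \<Otimes>\<^sub>M S) S"
    by measurable
  have "emeasure S A = emeasure (distr (measure_pmf p \<Otimes>\<^sub>M S) S (\<lambda>(s, \<omega>). case_nat s \<omega>)) A"
    by (simp only: PiM_iter)
  also have "\<dots> = (\<integral>\<^sup>+d. emeasure S (Pair d -` ((\<lambda>(s, \<omega>). case_nat s \<omega>) -` A \<inter> space (measure_pmf p \<Otimes>\<^sub>M S))) \<partial>p)"
    by (simp add: emeasure_distr sigma_finite_measure.emeasure_pair_measure_alt[OF S])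
  also have "\<dots> = (\<integral>\<^sup>+d. emeasure S {\<omega>. case_nat d \<omega> \<in> A} \<partial>p)"
    by (intro nn_integral_cong arg_cong[where f="emeasure S"]) (auto simp: space_pair_measure)
  finally show ?thesis .
qed

lemma emeasure_iid_split_prefix:
  assumes A[measurable]: "A \<in> sets (iid p)"
  shows "emeasure (iid p) A = (\<integral>\<^sup>+\<omega>. emeasure (iid p) {\<omega>'. comb_seq N \<omega> \<omega>' \<in> A} \<partial>iid p)"
proof -
  interpret sequence_space "measure_pmf p" by unfold_locales
  have S: "sigma_finite_measure S" by unfold_locales
  have "emeasure S A = emeasure (distr (S \<Otimes>\<^sub>M S) S (\<lambda>(\<omega>, \<omega>'). comb_seq N \<omega> \<omega>')) A"
    by (simp only: PiM_comb_seq)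
  also have "\<dots> = (\<integral>\<^sup>+\<omega>. emeasure S (Pair \<omega> -` ((\<lambda>(\<omega>, \<omega>'). comb_seq N \<omega> \<omega>') -` A \<inter> space (S \<Otimes>\<^sub>M S))) \<partial>S)"
    by (simp add: emeasure_distr sigma_finite_measure.emeasure_pair_measure_alt[OF S] measurable_comb_seq)
  also have "\<dots> = (\<integral>\<^sup>+\<omega>. emeasure S {\<omega>'. comb_seq N \<omega> \<omega>' \<in> A} \<partial>S)"
    by (intro nn_integral_cong arg_cong[where f="emeasure S"]) (auto simp: space_pair_measure)
  finally show ?thesis .
qed

lemma distr_iid_shift: "distr (iid p) (iid p) shift = iid p"
proof (rule measure_eqI)
  fix A assume "A \<in> sets (distr (iid p) (iid p) shift)"
  then have A: "A \<in> sets (iid p)" by simp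
  then have shift_A: "shift -` A \<in> sets (iid p)"
    using measurable_sets[OF measurable_shift] by simp
  have "emeasure (distr (iid p) (iid p) shift) A = emeasure (iid p) (shift -` A)"
    using emeasure_distr[OF measurable_shift A] by simp
  also have "\<dots> = (\<integral>\<^sup>+d. emeasure (iid p) A \<partial>p)"
    by (subst emeasure_iid_split_first[OF shift_A]) (simp add: shift_def)
  also have "\<dots> = emeasure (iid p) A"
    by simp
  finally show "emeasure (distr (iid p) (iid p) shift) A = emeasure (iid p) A" .
qed simp

lemma emeasure_iid_coordinate: "emeasure (iid p) {\<omega>. \<omega> i \<in> A} = emeasure (measure_pmf p) A"
proof -
  interpret product_prob_space "\<lambda>_. measure_pmf p" UNIV by unfold_locales
  show ?thesis using emeasure_PiM_Collect_single[of i A] by simp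
qed

lemma AE_iid_coordinate: "AE x in measure_pmf p. P x \<Longrightarrow> AE \<omega> in iid p. P (\<omega> i)"
proof -
  interpret product_prob_space "\<lambda>_. measure_pmf p" UNIV by unfold_locales
  show "AE x in measure_pmf p. P x \<Longrightarrow> AE \<omega> in iid p. P (\<omega> i)" by (rule AE_component) simp
qed

lemma nn_integral_pmf_split_point:
  fixes p :: "'a pmf"
  shows "(\<integral>\<^sup>+d. f d \<partial>p) = (\<integral>\<^sup>+d. f d * indicator (- {v}) d \<partial>p) + ennreal (pmf p v) * f v"
proof -
  have "(\<integral>\<^sup>+d. f d \<partial>p) = (\<integral>\<^sup>+d. f d * indicator (- {v}) d + f d * indicator {v} d \<partial>p)"
    by (rule nn_integral_cong) (simp split: split_indicator)
  also have "\<dots> = (\<integral>\<^sup>+d. f d * indicator (- {v}) d \<partial>p) + (\<integral>\<^sup>+d. f d * indicator {v} d \<partial>p)"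
    by (rule nn_integral_add) simp_all
  also have "(\<integral>\<^sup>+d. f d * indicator {v} d \<partial>p) = ennreal (pmf p v) * f v"
    by (simp add: emeasure_pmf_single mult.commute)
  finally show ?thesis .
qed

section \<open>Extending measure inequalities from a generating algebra\<close>

inductive_set monotone_hull :: "'a set set \<Rightarrow> 'a set set" for G where
  base: "A \<in> G \<Longrightarrow> A \<in> monotone_hull G"
| Union: "(\<And>i. A i \<in> monotone_hull G) \<Longrightarrow> incseq A \<Longrightarrow> (\<Union>i. A i) \<in> monotone_hull G"
| Inter: "(\<And>i. A i \<in> monotone_hull G) \<Longrightarrow> decseq A \<Longrightarrow> (\<Inter>i. A i) \<in> monotone_hull G"

lemma monotone_hull_subset_Pow:
  assumes "algebra \<Omega> G" shows "monotone_hull G \<subseteq> Pow \<Omega>"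
proof
  interpret algebra \<Omega> G by (rule assms)
  fix A assume "A \<in> monotone_hull G" then show "A \<in> Pow \<Omega>"
    by induction (use sets_into_space in blast)+
qed

lemma monotone_hull_Compl:
  assumes G: "algebra \<Omega> G" and A: "A \<in> monotone_hull G" shows "\<Omega> - A \<in> monotone_hull G"
  using A
proof induction
  case (base A) then show ?case by (simp add: monotone_hull.base algebra.compl_sets[OF G])
next
  case (Union A)
  have eq: "\<Omega> - (\<Union>i. A i) = (\<Inter>i. \<Omega> - A i)" by blast
  have "decseq (\<lambda>i. \<Omega> - A i)" using \<open>incseq A\<close> by (auto simp: incseq_def decseq_def)
  then show ?case unfolding eq by (rule monotone_hull.Inter[OF Union.IH])
next
  case (Inter A)
  have eq: "\<Omega> - (\<Inter>i. A i) = (\<Union>i. \<Omega> - A i)" by blast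
  have "incseq (\<lambda>i. \<Omega> - A i)" using \<open>decseq A\<close> by (auto simp: incseq_def decseq_def)
  then show ?case unfolding eq by (rule monotone_hull.Union[OF Inter.IH])
qed

text \<open>Taking the union with a fixed set commutes with monotone limits, so it preserves the hull
  as soon as it maps the generators into it.\<close>
lemma monotone_hull_Un_closed:
  assumes A: "A \<in> monotone_hull G" and gen: "\<And>C. C \<in> G \<Longrightarrow> C \<union> B \<in> monotone_hull G"
  shows "A \<union> B \<in> monotone_hull G"
  using A
proof induction
  case (base A) then show ?case by (rule gen)
next
  case (Union A)
  have eq: "(\<Union>i. A i) \<union> B = (\<Union>i. A i \<union> B)" by blast
  have "incseq (\<lambda>i. A i \<union> B)" using \<open>incseq A\<close> by (auto simp: incseq_def)
  then show ?case unfolding eq by (rule monotone_hull.Union[OF Union.IH])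
next
  case (Inter A)
  have eq: "(\<Inter>i. A i) \<union> B = (\<Inter>i. A i \<union> B)" by blast
  have "decseq (\<lambda>i. A i \<union> B)" using \<open>decseq A\<close> by (auto simp: decseq_def)
  then show ?case unfolding eq by (rule monotone_hull.Inter[OF Inter.IH])
qed

lemma monotone_hull_Un:
  assumes G: "algebra \<Omega> G" and A: "A \<in> monotone_hull G" and B: "B \<in> monotone_hull G"
  shows "A \<union> B \<in> monotone_hull G"
proof (rule monotone_hull_Un_closed[OF A])
  fix C assume "C \<in> G"
  have "B \<union> C \<in> monotone_hull G"
    by (rule monotone_hull_Un_closed[OF B])
       (simp add: \<open>C \<in> G\<close> monotone_hull.base ring_of_sets.Un[OF algebra.axioms(1)[OF G]])
  then show "C \<union> B \<in> monotone_hull G" by (simp add: Un_commute)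
qed

lemma monotone_hull_sigma_algebra:
  assumes G: "algebra \<Omega> G" shows "sigma_algebra \<Omega> (monotone_hull G)"
  unfolding sigma_algebra_iff2
proof (intro conjI ballI allI impI)
  show "monotone_hull G \<subseteq> Pow \<Omega>" by (rule monotone_hull_subset_Pow[OF G])
  interpret algebra \<Omega> G by (rule G)
  show "{} \<in> monotone_hull G" by (simp add: monotone_hull.base)
  show "\<Omega> - A \<in> monotone_hull G" if "A \<in> monotone_hull G" for A
    by (rule monotone_hull_Compl[OF G that])
  fix A :: "nat \<Rightarrow> 'a set" assume "range A \<subseteq> monotone_hull G"
  then have partial: "(\<Union>i\<le>n. A i) \<in> monotone_hull G" for n
    by (induction n) (auto simp: atMost_Suc intro: monotone_hull_Un[OF G])
  have eq: "(\<Union>i. A i) = (\<Union>n. \<Union>i\<le>n. A i)" by blast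
  have "incseq (\<lambda>n. \<Union>i\<le>n. A i)" by (force simp: incseq_def)
  then show "(\<Union>i. A i) \<in> monotone_hull G" unfolding eq by (rule monotone_hull.Union[OF partial])
qed

theorem sigma_sets_subset_monotone_class:
  assumes G: "algebra \<Omega> G" and "G \<subseteq> C"
    and Union: "\<And>A. (\<And>i. A i \<in> C) \<Longrightarrow> incseq A \<Longrightarrow> (\<Union>i. A i) \<in> C"
    and Inter: "\<And>A. (\<And>i. A i \<in> C) \<Longrightarrow> decseq A \<Longrightarrow> (\<Inter>i. A i) \<in> C"
  shows "sigma_sets \<Omega> G \<subseteq> C"
proof -
  have "monotone_hull G \<subseteq> C"
  proof
    fix A assume "A \<in> monotone_hull G" then show "A \<in> C"
      by induction (use assms in blast)+
  qed
  moreover have "sigma_sets \<Omega> G \<subseteq> monotone_hull G"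
    by (rule sigma_algebra.sigma_sets_subset[OF monotone_hull_sigma_algebra[OF G]])
       (auto intro: monotone_hull.base)
  ultimately show ?thesis by blast
qed

lemma emeasure_le_from_generating_algebra:
  assumes G: "algebra \<Omega> G" and sets_M: "sets M = sigma_sets \<Omega> G" and sets_N: "sets N = sets M"
    and "finite_measure N" and K: "K < \<top>"
    and le: "\<And>A. A \<in> G \<Longrightarrow> emeasure M A \<le> K * emeasure N A"
    and A: "A \<in> sets M"
  shows "emeasure M A \<le> K * emeasure N A"
proof -
  let ?C = "{A \<in> sets M. emeasure M A \<le> K * emeasure N A}"
  have "sigma_sets \<Omega> G \<subseteq> ?C"
  proof (rule sigma_sets_subset_monotone_class[OF G])
    show "G \<subseteq> ?C" using le sets_M by (auto intro: sigma_sets.Basic)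
  next
    fix A :: "nat \<Rightarrow> 'a set" assume A: "\<And>i. A i \<in> ?C" and "incseq A"
    then have sets: "range A \<subseteq> sets M" "(\<Union>i. A i) \<in> sets M" by auto
    have "emeasure M (A i) \<le> K * emeasure N (\<Union>i. A i)" for i
    proof -
      have "emeasure M (A i) \<le> K * emeasure N (A i)" using A[of i] by blast
      also have "\<dots> \<le> K * emeasure N (\<Union>i. A i)"
        using sets sets_N by (intro mult_left_mono emeasure_mono) auto
      finally show ?thesis .
    qed
    then have "emeasure M (\<Union>i. A i) \<le> K * emeasure N (\<Union>i. A i)"
      using Lim_emeasure_incseq[OF sets(1) \<open>incseq A\<close>] by (intro LIMSEQ_le_const2) auto
    with sets show "(\<Union>i. A i) \<in> ?C" by blast
  next
    fix A :: "nat \<Rightarrow> 'a set" assume A: "\<And>i. A i \<in> ?C" and "decseq A"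
    then have sets: "range A \<subseteq> sets N" "(\<Inter>i. A i) \<in> sets M" using sets_N by auto
    have lim: "(\<lambda>i. K * emeasure N (A i)) \<longlonglongrightarrow> K * emeasure N (\<Inter>i. A i)"
      using Lim_emeasure_decseq[OF sets(1) \<open>decseq A\<close>] finite_measure.emeasure_finite[OF \<open>finite_measure N\<close>]
      by (intro ennreal_tendsto_cmult) (auto simp: K)
    have "emeasure M (\<Inter>i. A i) \<le> K * emeasure N (A i)" for i
    proof -
      have "emeasure M (\<Inter>i. A i) \<le> emeasure M (A i)"
        using A[of i] by (intro emeasure_mono) auto
      also have "\<dots> \<le> K * emeasure N (A i)" using A[of i] by blast
      finally show ?thesis .
    qed
    then have "emeasure M (\<Inter>i. A i) \<le> K * emeasure N (\<Inter>i. A i)"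
      by (intro LIMSEQ_le_const[OF lim]) auto
    with sets show "(\<Inter>i. A i) \<in> ?C" by blast
  qed
  with A sets_M show ?thesis by blast
qed

section \<open>The letter process and the bit process\<close>

lemma Pmeas_iid: "Pmeas = iid letter_pmf"
  by (simp add: Pmeas_def)

lemma prob_space_Pmeas: "prob_space Pmeas"
  by (simp add: Pmeas_iid prob_space_iid)

lemma space_Pmeas[simp]: "space Pmeas = UNIV"
  by (simp add: Pmeas_iid)

lemma measurable_shift_Pmeas[measurable]: "shift \<in> measurable Pmeas Pmeas"
  by (simp add: Pmeas_iid)

lemma measurable_funpow_shift[measurable]: "shift ^^ k \<in> measurable Pmeas Pmeas"
  by (induction k) auto

lemma emeasure_Pmeas_split_first:
  "A \<in> sets Pmeas \<Longrightarrow> emeasure Pmeas A = (\<integral>\<^sup>+d. emeasure Pmeas {\<omega>. case_nat d \<omega> \<in> A} \<partial>letter_pmf)"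
  unfolding Pmeas_iid by (rule emeasure_iid_split_first)

lemma emeasure_Pmeas_split_prefix:
  "A \<in> sets Pmeas \<Longrightarrow> emeasure Pmeas A = (\<integral>\<^sup>+\<omega>. emeasure Pmeas {\<omega>'. comb_seq N \<omega> \<omega>' \<in> A} \<partial>Pmeas)"
  unfolding Pmeas_iid by (rule emeasure_iid_split_prefix)

lemma measurable_case_nat_Pmeas[measurable]: "case_nat d \<in> measurable Pmeas Pmeas"
  unfolding Pmeas_iid by measurable

lemma sets_Pmeas_Collect:
  "f \<in> measurable Pmeas N \<Longrightarrow> F \<in> sets N \<Longrightarrow> {\<omega>. f \<omega> \<in> F} \<in> sets Pmeas"
  using measurable_sets[of f Pmeas N F] by (simp add: vimage_def)

lemma space_Omega0[simp]: "space Omega0 = UNIV"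
  by (simp add: Omega0_def space_PiM)

lemma pmf_letter_Suc: "pmf letter_pmf (Suc k) = (1/2) ^ Suc k"
  unfolding letter_pmf_def by (simp add: pmf_map_inj' pmf_geometric)

lemma pmf_letter_antimono: "1 \<le> a \<Longrightarrow> a \<le> b \<Longrightarrow> pmf letter_pmf b \<le> pmf letter_pmf a"
  by (cases a; cases b) (auto simp: pmf_letter_Suc power_decreasing)

lemma pmf_letter_halves:
  assumes "1 \<le> a" shows "2 * ennreal (pmf letter_pmf (Suc a)) \<le> ennreal (pmf letter_pmf 1)"
proof -
  have "2 * pmf letter_pmf (Suc a) = (1/2) ^ a"
    by (simp add: pmf_letter_Suc)
  also have "\<dots> \<le> pmf letter_pmf 1"
    using power_decreasing[OF assms, of "1/2::real"] pmf_letter_Suc[of 0] by simp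
  finally have "ennreal (2 * pmf letter_pmf (Suc a)) \<le> ennreal (pmf letter_pmf 1)"
    by (rule ennreal_leI)
  then show ?thesis
    by (simp add: ennreal_mult)
qed

lemma AE_letter_positive: "AE d in measure_pmf letter_pmf. 1 \<le> d"
  unfolding letter_pmf_def by (simp add: AE_measure_pmf_iff)

lemma measurable_Theta[measurable]: "Theta \<in> measurable Pmeas Omega0"
  unfolding Omega0_def Theta_def theta_def Pmeas_def
  by (rule measurable_PiM_single') simp_all

lemma T0_eq_shift: "T0 = shift"
  by (simp add: fun_eq_iff T0_def shift_def)

lemma measurable_T0[measurable]: "T0 \<in> measurable Omega0 Omega0"
  unfolding Omega0_def T0_eq_shift shift_def
  by (rule measurable_PiM_single') simp_all

lemma measurable_funpow_T0[measurable]: "T0 ^^ k \<in> measurable Omega0 Omega0"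
  by (induction k) auto

lemma funpow_shift_Theta: "(shift ^^ k) (Theta \<omega>) = Theta ((shift ^^ k) \<omega>)"
  by (simp add: funpow_shift Theta_def)

lemma emeasure_P0: "A \<in> sets Omega0 \<Longrightarrow> emeasure P0 A = emeasure Pmeas (Theta -` A)"
  unfolding P0_def by (simp add: emeasure_distr)

lemma measure_P0: "A \<in> sets Omega0 \<Longrightarrow> measure P0 A = measure Pmeas (Theta -` A)"
  unfolding P0_def by (simp add: measure_distr)

text \<open>(a) Since \<open>T0 \<circ> Theta = Theta \<circ> shift\<close>, invariance of \<open>P\<close> transfers to \<open>P0\<close>.\<close>
theorem P0_shift_invariant: "distr P0 Omega0 T0 = P0"
proof -
  have "distr P0 Omega0 T0 = distr Pmeas Omega0 (T0 \<circ> Theta)"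
    unfolding P0_def by (rule distr_distr) auto
  also have "T0 \<circ> Theta = Theta \<circ> shift"
    by (simp add: fun_eq_iff T0_eq_shift funpow_shift_Theta[of 1, simplified])
  also have "distr Pmeas Omega0 (Theta \<circ> shift) = distr (distr Pmeas Pmeas shift) Omega0 Theta"
    by (rule distr_distr[symmetric]) auto
  also have "distr Pmeas Pmeas shift = Pmeas"
    by (simp add: Pmeas_iid distr_iid_shift)
  finally show ?thesis
    by (simp add: P0_def)
qed

section \<open>Conditional probability of the all-ones cylinders\<close>

definition run :: "nat \<Rightarrow> (nat \<Rightarrow> nat) set" where
  "run n = {\<omega>. \<forall>j<n. \<omega> (Suc j) = \<omega> j + 1}"

lemma Theta_vimage_cyl_True: "Theta -` cyl (\<lambda>_. True) n = run n"
  by (auto simp: cyl_def run_def Theta_def theta_def)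

lemma run_last: "\<omega> \<in> run n \<Longrightarrow> \<omega> n = \<omega> 0 + n"
  by (induction n) (auto simp: run_def)

lemma measurable_run[measurable]: "run n \<in> sets Pmeas"
proof -
  have "{\<omega>\<in>space Pmeas. \<forall>j<n. \<omega> (Suc j) = \<omega> j + 1} \<in> sets Pmeas"
    unfolding Pmeas_def by measurable
  then show ?thesis by (simp add: run_def)
qed

lemma run_Suc_comb_seq:
  "comb_seq (Suc n) \<omega> \<omega>' \<in> run (Suc n) \<longleftrightarrow> \<omega> \<in> run n \<and> \<omega>' 0 = Suc (\<omega> n)"
proof -
  let ?c = "comb_seq (Suc n) \<omega> \<omega>'"
  have "?c \<in> run (Suc n) \<longleftrightarrow> (\<forall>j<n. ?c (Suc j) = ?c j + 1) \<and> ?c (Suc n) = ?c n + 1"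
    by (auto simp: run_def less_Suc_eq)
  moreover have "(\<forall>j<n. ?c (Suc j) = ?c j + 1) \<longleftrightarrow> \<omega> \<in> run n"
    by (simp add: run_def comb_seq_less)
  moreover have "?c (Suc n) = \<omega>' 0" "?c n = \<omega> n"
    by (simp_all add: comb_seq_def)
  ultimately show ?thesis by simp
qed

lemma emeasure_run_Suc:
  "emeasure Pmeas (run (Suc n)) \<le> ennreal ((1/2) ^ Suc n) * emeasure Pmeas (run n)"
proof -
  have extend: "{\<omega>'. comb_seq (Suc n) \<omega> \<omega>' \<in> run (Suc n)}
      = (if \<omega> \<in> run n then {\<omega>'. \<omega>' 0 \<in> {Suc (\<omega> n)}} else {})" for \<omega>
    by (auto simp: run_Suc_comb_seq)
  have step: "emeasure Pmeas {\<omega>'. comb_seq (Suc n) \<omega> \<omega>' \<in> run (Suc n)}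
      \<le> ennreal ((1/2) ^ Suc n) * indicator (run n) \<omega>" for \<omega>
  proof (cases "\<omega> \<in> run n")
    case True
    have "emeasure Pmeas {\<omega>'. \<omega>' 0 \<in> {Suc (\<omega> n)}} = pmf letter_pmf (Suc (\<omega> n))"
      by (simp only: Pmeas_iid emeasure_iid_coordinate) (simp add: emeasure_pmf_single)
    moreover have "pmf letter_pmf (Suc (\<omega> n)) \<le> (1/2) ^ Suc n"
      using run_last[OF True] by (simp only: pmf_letter_Suc) (simp add: power_decreasing)
    ultimately show ?thesis
      using True by (simp add: extend ennreal_leI)
  qed (simp add: extend)
  have "emeasure Pmeas (run (Suc n))
      = (\<integral>\<^sup>+\<omega>. emeasure Pmeas {\<omega>'. comb_seq (Suc n) \<omega> \<omega>' \<in> run (Suc n)} \<partial>Pmeas)"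
    by (rule emeasure_Pmeas_split_prefix) simp
  also have "\<dots> \<le> (\<integral>\<^sup>+\<omega>. ennreal ((1/2) ^ Suc n) * indicator (run n) \<omega> \<partial>Pmeas)"
    by (intro nn_integral_mono step)
  also have "\<dots> = ennreal ((1/2) ^ Suc n) * emeasure Pmeas (run n)"
    by (rule nn_integral_cmult_indicator) simp
  finally show ?thesis .
qed

theorem P0_all_ones_conditional:
  "(\<lambda>n. measure P0 (cyl (\<lambda>_. True) (Suc n) \<inter> cyl (\<lambda>_. True) n)
         / measure P0 (cyl (\<lambda>_. True) n)) \<longlonglongrightarrow> 0"
proof (rule tendsto_sandwich[where f="\<lambda>_. 0" and h="\<lambda>n. (1/2) ^ Suc n"])
  interpret prob_space Pmeas by (rule prob_space_Pmeas)
  have measurable_cyl: "cyl (\<lambda>_. True) n \<in> sets Omega0" for n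
  proof -
    have "{\<omega>\<in>space Omega0. \<forall>j<n. \<omega> j = True} \<in> sets Omega0"
      unfolding Omega0_def by measurable
    then show ?thesis by (simp add: cyl_def)
  qed
  have ratio: "measure P0 (cyl (\<lambda>_. True) (Suc n) \<inter> cyl (\<lambda>_. True) n) / measure P0 (cyl (\<lambda>_. True) n)
      = measure Pmeas (run (Suc n)) / measure Pmeas (run n)" for n
  proof -
    have "cyl (\<lambda>_. True) (Suc n) \<inter> cyl (\<lambda>_. True) n = cyl (\<lambda>_. True) (Suc n)"
      by (auto simp: cyl_def)
    then show ?thesis
      by (simp add: measure_P0[OF measurable_cyl] Theta_vimage_cyl_True)
  qed
  have "measure Pmeas (run (Suc n)) \<le> (1/2) ^ Suc n * measure Pmeas (run n)" for n
    using emeasure_run_Suc[of n] by (simp add: emeasure_eq_measure ennreal_mult[symmetric])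
  then have "measure Pmeas (run (Suc n)) / measure Pmeas (run n) \<le> (1/2) ^ Suc n" for n
    by (cases "measure Pmeas (run n) = 0") (simp_all add: divide_le_eq measure_le_0_iff)
  then show "\<forall>\<^sub>F n in sequentially. measure P0 (cyl (\<lambda>_. True) (Suc n) \<inter> cyl (\<lambda>_. True) n)
      / measure P0 (cyl (\<lambda>_. True) n) \<le> (1/2) ^ Suc n"
    by (simp add: ratio)
  show "(\<lambda>n. (1/2::real) ^ Suc n) \<longlonglongrightarrow> 0"
    by (rule LIMSEQ_Suc[OF LIMSEQ_power_zero]) simp_all
qed simp_all

section \<open>The bit process started after a given letter\<close>

definition determined_by :: "nat \<Rightarrow> (nat \<Rightarrow> bool) set \<Rightarrow> bool" where
  "determined_by k F \<longleftrightarrow> (\<forall>\<eta> \<eta>'. (\<forall>j<k. \<eta> j = \<eta>' j) \<longrightarrow> (\<eta> \<in> F \<longleftrightarrow> \<eta>' \<in> F))"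

definition slice :: "bool \<Rightarrow> (nat \<Rightarrow> bool) set \<Rightarrow> (nat \<Rightarrow> bool) set" where
  "slice b F = {\<eta>. case_nat b \<eta> \<in> F}"

text \<open>The law of the bit sequence produced by the letters \<open>c, \<omega>\<^sub>0, \<omega>\<^sub>1, \<dots>\<close>, i.e. of the bit process
  conditioned on the letter just before it being \<open>c\<close>.\<close>
definition start_law :: "nat \<Rightarrow> (nat \<Rightarrow> bool) measure" where
  "start_law c = distr Pmeas Omega0 (\<lambda>\<omega>. Theta (case_nat c \<omega>))"

lemma measurable_Theta_case_nat[measurable]: "(\<lambda>\<omega>. Theta (case_nat c \<omega>)) \<in> measurable Pmeas Omega0"
  by measurable

lemma emeasure_start_law:
  "F \<in> sets Omega0 \<Longrightarrow> emeasure (start_law c) F = emeasure Pmeas {\<omega>. Theta (case_nat c \<omega>) \<in> F}"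
  unfolding start_law_def by (simp add: emeasure_distr vimage_def)

lemma sets_start_law[simp]: "sets (start_law c) = sets Omega0"
  by (simp add: start_law_def)

lemma space_start_law[simp]: "space (start_law c) = UNIV"
  by (simp add: start_law_def)

lemma prob_space_start_law: "prob_space (start_law c)"
  unfolding start_law_def by (intro prob_space.prob_space_distr prob_space_Pmeas) simp

lemma emeasure_Theta_vimage:
  "F \<in> sets Omega0 \<Longrightarrow> emeasure Pmeas (Theta -` F) = (\<integral>\<^sup>+d. emeasure (start_law d) F \<partial>letter_pmf)"
proof -
  assume F: "F \<in> sets Omega0"
  have "emeasure Pmeas (Theta -` F) = emeasure Pmeas {\<omega>. Theta \<omega> \<in> F}"
    by (simp add: vimage_def)
  also have "\<dots> = (\<integral>\<^sup>+d. emeasure Pmeas {\<omega>. case_nat d \<omega> \<in> {\<omega>. Theta \<omega> \<in> F}} \<partial>letter_pmf)"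
    by (rule emeasure_Pmeas_split_first[OF sets_Pmeas_Collect[OF measurable_Theta F]])
  also have "\<dots> = (\<integral>\<^sup>+d. emeasure (start_law d) F \<partial>letter_pmf)"
    by (simp add: emeasure_start_law F)
  finally show ?thesis .
qed

lemma measurable_slice[measurable]:
  assumes "F \<in> sets Omega0" shows "slice b F \<in> sets Omega0"
proof -
  have "(\<lambda>\<eta>. case_nat b \<eta>) \<in> measurable Omega0 Omega0"
    unfolding Omega0_def by measurable
  from measurable_sets[OF this assms] show ?thesis by (simp add: slice_def vimage_def)
qed

lemma determined_by_slice: "determined_by (Suc k) F \<Longrightarrow> determined_by k (slice b F)"
  unfolding determined_by_def slice_def
  by (metis (no_types, lifting) less_Suc_eq_0_disj mem_Collect_eq nat.case)

lemma Theta_case_nat_case_nat: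
  "Theta (case_nat c (case_nat d \<omega>)) = case_nat (d = Suc c) (Theta (case_nat d \<omega>))"
  by (rule ext, case_tac x) (simp_all add: Theta_def theta_def)

lemma emeasure_start_law_step:
  assumes "F \<in> sets Omega0"
  shows "emeasure (start_law c) F = (\<integral>\<^sup>+d. emeasure (start_law d) (slice (d = Suc c) F) \<partial>letter_pmf)"
proof -
  have "emeasure (start_law c) F = emeasure Pmeas {\<omega>. Theta (case_nat c \<omega>) \<in> F}"
    by (rule emeasure_start_law[OF assms])
  also have "\<dots> = (\<integral>\<^sup>+d. emeasure Pmeas {\<omega>. Theta (case_nat d \<omega>) \<in> slice (d = Suc c) F} \<partial>letter_pmf)"
    by (subst emeasure_Pmeas_split_first[OF sets_Pmeas_Collect[OF measurable_Theta_case_nat assms]])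
       (simp add: slice_def Theta_case_nat_case_nat)
  also have "\<dots> = (\<integral>\<^sup>+d. emeasure (start_law d) (slice (d = Suc c) F) \<partial>letter_pmf)"
    using assms by (simp add: emeasure_start_law)
  finally show ?thesis .
qed

lemma emeasure_start_law_decompose:
  assumes F: "F \<in> sets Omega0"
  shows "emeasure (start_law c) F
    = (\<integral>\<^sup>+d. emeasure (start_law d) (slice False F) * indicator (- {Suc c}) d \<partial>letter_pmf)
      + ennreal (pmf letter_pmf (Suc c)) * emeasure (start_law (Suc c)) (slice True F)"
proof -
  have "(\<integral>\<^sup>+d. emeasure (start_law d) (slice (d = Suc c) F) * indicator (- {Suc c}) d \<partial>letter_pmf)
      = (\<integral>\<^sup>+d. emeasure (start_law d) (slice False F) * indicator (- {Suc c}) d \<partial>letter_pmf)"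
    by (rule nn_integral_cong) (simp split: split_indicator)
  then show ?thesis
    unfolding emeasure_start_law_step[OF F]
    by (subst nn_integral_pmf_split_point[where v="Suc c"]) simp
qed

text \<open>The first bit is \<open>1\<close> only for the successor letter, whose probability decreases with the
  preceding letter; the \<open>0\<close>-branch after \<open>c'\<close> contains the atom at the letter \<open>1\<close>, which carries
  at least the weight of the letter \<open>c' + 1\<close> in the \<open>0\<close>-branch.\<close>
lemma start_law_dominated_step:
  assumes F: "F \<in> sets Omega0"
    and slices: "\<And>b a a'. 1 \<le> a' \<Longrightarrow> a' \<le> a \<Longrightarrow>
      emeasure (start_law a) (slice b F) \<le> 2 * emeasure (start_law a') (slice b F)"
    and c: "1 \<le> c'" "c' \<le> c"
  shows "emeasure (start_law c) F \<le> 2 * emeasure (start_law c') F"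
proof -
  define p where "p = (\<lambda>a. ennreal (pmf letter_pmf a))"
  define f where "f = (\<lambda>b d. emeasure (start_law d) (slice b F))"
  define R where "R = (\<lambda>v. \<integral>\<^sup>+d. f False d * indicator (- {v}) d \<partial>letter_pmf)"
  have split: "emeasure (start_law a) F = R (Suc a) + p (Suc a) * f True (Suc a)" for a
    unfolding R_def p_def f_def by (rule emeasure_start_law_decompose[OF F])
  have total: "(\<integral>\<^sup>+d. f False d \<partial>letter_pmf) = R v + p v * f False v" for v
    unfolding R_def p_def by (rule nn_integral_pmf_split_point)
  have atom_1: "p 1 * f False 1 \<le> R (Suc c')"
  proof -
    have "p 1 * f False 1 = (\<integral>\<^sup>+d. f False d * indicator {1} d \<partial>letter_pmf)"
      by (simp add: p_def emeasure_pmf_single mult.commute)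
    also have "\<dots> \<le> R (Suc c')"
      unfolding R_def using c(1) by (intro nn_integral_mono) (auto split: split_indicator)
    finally show ?thesis .
  qed
  have "p (Suc c') * f False (Suc c') \<le> p (Suc c') * (2 * f False 1)"
    using slices[of 1 "Suc c'" False] by (intro mult_left_mono) (auto simp: f_def)
  also have "\<dots> = (2 * p (Suc c')) * f False 1"
    by (simp add: ac_simps)
  also have "\<dots> \<le> p 1 * f False 1"
    using pmf_letter_halves[OF c(1)] by (simp add: p_def mult_right_mono)
  finally have zero_branch: "p (Suc c') * f False (Suc c') \<le> p 1 * f False 1" .
  have one_branch: "p (Suc c) * f True (Suc c) \<le> p (Suc c') * (2 * f True (Suc c'))"
    using slices[of "Suc c'" "Suc c" True] pmf_letter_antimono[of "Suc c'" "Suc c"] c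
    by (intro mult_mono) (auto simp: p_def f_def)
  have "emeasure (start_law c) F = R (Suc c) + p (Suc c) * f True (Suc c)"
    by (rule split)
  also have "\<dots> \<le> (R (Suc c') + p (Suc c') * f False (Suc c')) + p (Suc c') * (2 * f True (Suc c'))"
    using total[of "Suc c"] total[of "Suc c'"] one_branch
    by (intro add_mono) (auto intro: le_iff_add[THEN iffD2])
  also have "\<dots> \<le> (R (Suc c') + R (Suc c')) + p (Suc c') * (2 * f True (Suc c'))"
    using zero_branch atom_1 by (intro add_mono) auto
  also have "\<dots> = 2 * emeasure (start_law c') F"
    by (simp only: split[of c'] mult_2 distrib_left add_ac)
  finally show ?thesis .
qed

lemma start_law_dominated_determined:
  assumes "F \<in> sets Omega0" "determined_by k F" "1 \<le> c'" "c' \<le> c"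
  shows "emeasure (start_law c) F \<le> 2 * emeasure (start_law c') F"
  using assms
proof (induction k arbitrary: F c c')
  case 0
  then have "F = {} \<or> F = UNIV"
    unfolding determined_by_def by blast
  then have "emeasure (start_law c) F = emeasure (start_law c') F"
    using prob_space.emeasure_space_1[OF prob_space_start_law] by auto
  then show ?case by (simp add: mult_2)
next
  case (Suc k)
  show ?case
    by (rule start_law_dominated_step[OF Suc.prems(1) _ Suc.prems(3,4)])
       (use Suc.IH Suc.prems(1,2) determined_by_slice measurable_slice in blast)
qed

definition finitely_determined :: "(nat \<Rightarrow> bool) set set" where
  "finitely_determined = {F \<in> sets Omega0. \<exists>k. determined_by k F}"

lemma determined_by_mono: "determined_by k F \<Longrightarrow> k \<le> k' \<Longrightarrow> determined_by k' F"
  unfolding determined_by_def by auto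

lemma algebra_finitely_determined: "algebra UNIV finitely_determined"
  unfolding algebra_iff_Un
proof (intro conjI ballI)
  show "finitely_determined \<subseteq> Pow UNIV" "{} \<in> finitely_determined"
    by (auto simp: finitely_determined_def determined_by_def)
  fix A B assume "A \<in> finitely_determined" "B \<in> finitely_determined"
  then obtain k l where A: "A \<in> sets Omega0" "determined_by k A" and B: "B \<in> sets Omega0" "determined_by l B"
    by (auto simp: finitely_determined_def)
  have "determined_by k (UNIV - A)"
    using A(2) unfolding determined_by_def by blast
  with A(1) show "UNIV - A \<in> finitely_determined"
    by (auto simp: finitely_determined_def sets.compl_sets[of A Omega0, simplified])
  have "determined_by (max k l) A" "determined_by (max k l) B"
    using A(2) B(2) by (auto intro: determined_by_mono)
  then have "determined_by (max k l) (A \<union> B)"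
    unfolding determined_by_def by blast
  with A(1) B(1) show "A \<union> B \<in> finitely_determined"
    by (auto simp: finitely_determined_def)
qed

lemma coordinate_set_Omega0: "{\<eta>::nat \<Rightarrow> bool. \<eta> j \<in> B} \<in> sets Omega0"
proof -
  have "{\<eta>\<in>space Omega0. \<eta> j \<in> B} \<in> sets Omega0"
    unfolding Omega0_def by measurable
  then show ?thesis by simp
qed

lemma sets_Omega0_finitely_determined: "sets Omega0 = sigma_sets UNIV finitely_determined"
proof
  have "sets Omega0 = sigma_sets UNIV {{\<eta>::nat \<Rightarrow> bool. \<eta> j \<in> B} | j B. True}"
    unfolding Omega0_def by (simp add: sets_PiM_single)
  also have "\<dots> \<subseteq> sigma_sets UNIV finitely_determined"
  proof (rule sigma_sets_mono', safe)
    fix j and B :: "bool set"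
    have "determined_by (Suc j) {\<eta>. \<eta> j \<in> B}"
      unfolding determined_by_def by auto
    then show "{\<eta>. \<eta> j \<in> B} \<in> finitely_determined"
      using coordinate_set_Omega0 by (auto simp: finitely_determined_def)
  qed
  finally show "sets Omega0 \<subseteq> sigma_sets UNIV finitely_determined" .
  show "sigma_sets UNIV finitely_determined \<subseteq> sets Omega0"
    using sets.sigma_sets_subset[of finitely_determined Omega0]
    by (auto simp: finitely_determined_def)
qed

lemma start_law_dominated:
  assumes "F \<in> sets Omega0" "1 \<le> c'" "c' \<le> c"
  shows "emeasure (start_law c) F \<le> 2 * emeasure (start_law c') F"
proof (rule emeasure_le_from_generating_algebra[OF algebra_finitely_determined])
  show "finite_measure (start_law c')"
    using prob_space_start_law by (rule prob_space.axioms(1))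
  show "emeasure (start_law c) A \<le> 2 * emeasure (start_law c') A" if "A \<in> finitely_determined" for A
    using that assms(2,3) start_law_dominated_determined by (auto simp: finitely_determined_def)
qed (use assms(1) sets_Omega0_finitely_determined in auto)

text \<open>Uniform comparison with the stationary law: averaging over the letter \<open>1\<close>, which has
  probability \<open>1/2\<close>, shows that no preceding letter inflates a probability by more than \<open>4\<close>.\<close>
lemma start_law_le_Theta_vimage:
  assumes F: "F \<in> sets Omega0" and d: "1 \<le> d"
  shows "emeasure (start_law d) F \<le> 4 * emeasure Pmeas (Theta -` F)"
proof -
  have "emeasure (start_law d) F \<le> 2 * emeasure (start_law 1) F"
    by (rule start_law_dominated[OF F order_refl d])
  also have "\<dots> = 4 * (ennreal (pmf letter_pmf 1) * emeasure (start_law 1) F)"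
  proof -
    have p1: "pmf letter_pmf 1 = 1/2"
      using pmf_letter_Suc[of 0] by simp
    have "4 * ennreal (pmf letter_pmf 1) = ennreal 4 * ennreal (1/2)"
      unfolding p1 by simp
    also have "\<dots> = ennreal (4 * (1/2))"
      by (rule ennreal_mult[symmetric]) auto
    finally have "4 * ennreal (pmf letter_pmf 1) = 2"
      by simp
    then show ?thesis by (simp add: mult.assoc[symmetric])
  qed
  also have "\<dots> \<le> 4 * (\<integral>\<^sup>+a. emeasure (start_law a) F \<partial>letter_pmf)"
    using nn_integral_pmf_split_point[where f="\<lambda>a. emeasure (start_law a) F" and p=letter_pmf and v=1]
    by (intro mult_left_mono) (auto intro: le_iff_add[THEN iffD2] simp: add.commute)
  also have "\<dots> = 4 * emeasure Pmeas (Theta -` F)"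
    by (simp add: emeasure_Theta_vimage[OF F])
  finally show ?thesis .
qed

section \<open>\<open>\<psi>\<close>-mixing\<close>

lemma coord_sigma_determined: "E \<in> coord_sigma n \<Longrightarrow> determined_by n E"
  unfolding coord_sigma_def
proof (induction rule: sigma_sets.induct)
  case (Basic a)
  then obtain j B where "a = {\<omega>. \<omega> j \<in> B}" "j < n" by blast
  then show ?case unfolding determined_by_def by auto
next
  case Empty then show ?case unfolding determined_by_def by blast
next
  case (Compl a) then show ?case unfolding determined_by_def by blast
next
  case (Union a) then show ?case unfolding determined_by_def by blast
qed

lemma coord_sigma_sets: "E \<in> coord_sigma n \<Longrightarrow> E \<in> sets Omega0"
  unfolding coord_sigma_def
  by (rule set_mp[OF sets.sigma_sets_subset[of _ Omega0, simplified]]) (auto intro: coordinate_set_Omega0)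

lemma Theta_comb_seq_determined:
  assumes "determined_by n E" "n < N"
  shows "Theta (comb_seq N \<omega> \<omega>') \<in> E \<longleftrightarrow> Theta \<omega> \<in> E"
proof -
  have "\<forall>j<n. Theta (comb_seq N \<omega> \<omega>') j = Theta \<omega> j"
    using assms(2) by (simp add: Theta_def comb_seq_less)
  with assms(1) show ?thesis unfolding determined_by_def by blast
qed

lemma emeasure_Theta_vimage_Int_shift:
  assumes E: "E \<in> coord_sigma n" and B: "B \<in> sets Pmeas" and "n < N" "k \<le> N"
  shows "emeasure Pmeas (Theta -` E \<inter> (shift ^^ k) -` B)
    = (\<integral>\<^sup>+\<omega>. emeasure Pmeas {\<omega>'. comb_seq (N - k) ((shift ^^ k) \<omega>) \<omega>' \<in> B} * indicator (Theta -` E) \<omega> \<partial>Pmeas)"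
proof -
  have X: "Theta -` E \<in> sets Pmeas"
    using sets_Pmeas_Collect[OF measurable_Theta coord_sigma_sets[OF E]] by (simp add: vimage_def)
  have XB: "Theta -` E \<inter> (shift ^^ k) -` B \<in> sets Pmeas"
    using X measurable_sets[OF measurable_funpow_shift B] by auto
  have "{\<omega>'. comb_seq N \<omega> \<omega>' \<in> Theta -` E \<inter> (shift ^^ k) -` B}
      = (if \<omega> \<in> Theta -` E then {\<omega>'. comb_seq (N - k) ((shift ^^ k) \<omega>) \<omega>' \<in> B} else {})" for \<omega>
    using Theta_comb_seq_determined[OF coord_sigma_determined[OF E] \<open>n < N\<close>]
    by (auto simp: funpow_shift_comb_seq[OF \<open>k \<le> N\<close>])
  then show ?thesis
    by (subst emeasure_Pmeas_split_prefix[OF XB, of N]) (auto intro!: nn_integral_cong split: split_indicator)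
qed

text \<open>For a gap \<open>N > n\<close> the two blocks use disjoint letters and are independent.\<close>
lemma emeasure_mixing_gap:
  assumes E: "E \<in> coord_sigma n" and F: "F \<in> sets Omega0" and "n < N"
  shows "emeasure Pmeas (Theta -` E \<inter> (shift ^^ N) -` (Theta -` F))
    = emeasure Pmeas (Theta -` F) * emeasure Pmeas (Theta -` E)"
proof -
  have X: "Theta -` E \<in> sets Pmeas" and Y: "Theta -` F \<in> sets Pmeas"
    using sets_Pmeas_Collect[OF measurable_Theta] coord_sigma_sets[OF E] F by (simp_all add: vimage_def)
  have "emeasure Pmeas (Theta -` E \<inter> (shift ^^ N) -` (Theta -` F))
      = (\<integral>\<^sup>+\<omega>. emeasure Pmeas {\<omega>'. comb_seq (N - N) ((shift ^^ N) \<omega>) \<omega>' \<in> Theta -` F}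
          * indicator (Theta -` E) \<omega> \<partial>Pmeas)"
    by (rule emeasure_Theta_vimage_Int_shift[OF E Y \<open>n < N\<close> order_refl])
  also have "\<dots> = (\<integral>\<^sup>+\<omega>. emeasure Pmeas (Theta -` F) * indicator (Theta -` E) \<omega> \<partial>Pmeas)"
    by (simp add: comb_seq_0 vimage_def)
  also have "\<dots> = emeasure Pmeas (Theta -` F) * emeasure Pmeas (Theta -` E)"
    by (rule nn_integral_cmult_indicator[OF X])
  finally show ?thesis .
qed

text \<open>Without a gap the later block starts after the shared letter \<open>\<omega>\<^sub>n \<ge> 1\<close>; the comparison with
  \<open>P0\<close> bounds its conditional probability by \<open>4 P0(F)\<close>.\<close>
lemma emeasure_mixing_adjacent:
  assumes E: "E \<in> coord_sigma n" and F: "F \<in> sets Omega0"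
  shows "emeasure Pmeas (Theta -` E \<inter> (shift ^^ n) -` (Theta -` F))
    \<le> 4 * emeasure Pmeas (Theta -` F) * emeasure Pmeas (Theta -` E)"
proof -
  have X: "Theta -` E \<in> sets Pmeas" and Y: "Theta -` F \<in> sets Pmeas"
    using sets_Pmeas_Collect[OF measurable_Theta] coord_sigma_sets[OF E] F by (simp_all add: vimage_def)
  have positive: "AE \<omega> in Pmeas. 1 \<le> \<omega> n"
    unfolding Pmeas_iid by (rule AE_iid_coordinate[OF AE_letter_positive])
  have "emeasure Pmeas (Theta -` E \<inter> (shift ^^ n) -` (Theta -` F))
      = (\<integral>\<^sup>+\<omega>. emeasure Pmeas {\<omega>'. comb_seq (Suc n - n) ((shift ^^ n) \<omega>) \<omega>' \<in> Theta -` F}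
          * indicator (Theta -` E) \<omega> \<partial>Pmeas)"
    by (rule emeasure_Theta_vimage_Int_shift[OF E Y lessI le_SucI[OF order_refl]])
  also have "\<dots> = (\<integral>\<^sup>+\<omega>. emeasure (start_law (\<omega> n)) F * indicator (Theta -` E) \<omega> \<partial>Pmeas)"
    by (intro nn_integral_cong) (simp add: emeasure_start_law[OF F] funpow_shift vimage_def)
  also have "\<dots> \<le> (\<integral>\<^sup>+\<omega>. 4 * emeasure Pmeas (Theta -` F) * indicator (Theta -` E) \<omega> \<partial>Pmeas)"
    using positive
    by (intro nn_integral_mono_AE, eventually_elim)
       (simp add: start_law_le_Theta_vimage[OF F] split: split_indicator)
  also have "\<dots> = 4 * emeasure Pmeas (Theta -` F) * emeasure Pmeas (Theta -` E)"
    by (rule nn_integral_cmult_indicator[OF X])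
  finally show ?thesis .
qed

lemma measure_P0_Int_shift:
  assumes E: "E \<in> sets Omega0" and F: "F \<in> sets Omega0"
  shows "measure P0 (E \<inter> (T0 ^^ k) -` F) = measure Pmeas (Theta -` E \<inter> (shift ^^ k) -` (Theta -` F))"
proof -
  have "(T0 ^^ k) -` F \<in> sets Omega0"
    using measurable_sets[OF measurable_funpow_T0 F] by simp
  with E have "measure P0 (E \<inter> (T0 ^^ k) -` F) = measure Pmeas (Theta -` (E \<inter> (T0 ^^ k) -` F))"
    by (intro measure_P0) auto
  also have "Theta -` (E \<inter> (T0 ^^ k) -` F) = Theta -` E \<inter> (shift ^^ k) -` (Theta -` F)"
    by (auto simp: T0_eq_shift funpow_shift_Theta)
  finally show ?thesis .
qed

lemma P0_mixing_gap:
  assumes E: "E \<in> coord_sigma n" and F: "F \<in> sets Omega0" and "0 < m"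
  shows "measure P0 (E \<inter> (T0 ^^ (n + m)) -` F) = measure P0 E * measure P0 F"
proof -
  have "measure P0 (E \<inter> (T0 ^^ (n + m)) -` F)
      = measure Pmeas (Theta -` E \<inter> (shift ^^ (n + m)) -` (Theta -` F))"
    by (rule measure_P0_Int_shift[OF coord_sigma_sets[OF E] F])
  also have "\<dots> = measure Pmeas (Theta -` F) * measure Pmeas (Theta -` E)"
    using emeasure_mixing_gap[OF E F, of "n + m"] \<open>0 < m\<close> by (simp add: measure_def enn2real_mult)
  also have "\<dots> = measure P0 E * measure P0 F"
    using coord_sigma_sets[OF E] F by (simp add: measure_P0)
  finally show ?thesis .
qed

lemma P0_mixing_adjacent:
  assumes E: "E \<in> coord_sigma n" and F: "F \<in> sets Omega0"
  shows "measure P0 (E \<inter> (T0 ^^ n) -` F) \<le> 4 * measure P0 E * measure P0 F"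
proof -
  interpret prob_space Pmeas by (rule prob_space_Pmeas)
  have "measure P0 (E \<inter> (T0 ^^ n) -` F) = measure Pmeas (Theta -` E \<inter> (shift ^^ n) -` (Theta -` F))"
    by (rule measure_P0_Int_shift[OF coord_sigma_sets[OF E] F])
  also have "\<dots> \<le> enn2real (4 * emeasure Pmeas (Theta -` F) * emeasure Pmeas (Theta -` E))"
    unfolding measure_def
    by (rule enn2real_mono[OF emeasure_mixing_adjacent[OF E F]]) (simp add: ennreal_mult_less_top less_top[symmetric] ennreal_mult_eq_top_iff emeasure_finite)
  also have "\<dots> = 4 * measure P0 F * measure P0 E"
    using coord_sigma_sets[OF E] F by (simp add: emeasure_P0 measure_def enn2real_mult)
  finally show ?thesis by (simp add: ac_simps)
qed

theorem P0_psi_mixing: "psi_mixing P0"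
  unfolding psi_mixing_def
proof (intro exI[of _ "\<lambda>m. if m = 0 then 3 else 0"] conjI allI impI)
  show "(\<lambda>m. if m = 0 then 3 else 0::real) \<longlonglongrightarrow> 0"
    by (rule tendsto_eventually) (auto simp: eventually_sequentially intro!: exI[of _ 1])
  fix m n E F assume E: "E \<in> coord_sigma n" and F: "F \<in> sets Omega0"
  show "\<bar>measure P0 (E \<inter> (T0 ^^ (n + m)) -` F) - measure P0 E * measure P0 F\<bar>
      \<le> (if m = 0 then 3 else 0) * measure P0 E * measure P0 F"
  proof (cases "m = 0")
    case True
    have "measure P0 (E \<inter> (T0 ^^ (n + m)) -` F) \<le> 4 * (measure P0 E * measure P0 F)"
      using True P0_mixing_adjacent[OF E F] by (simp add: mult.assoc)
    moreover have "\<bar>z - w\<bar> \<le> 3 * w" if "0 \<le> z" "z \<le> 4 * w" for z w :: real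
      using that by linarith
    ultimately show ?thesis
      using True by (simp add: mult.assoc)
  qed (simp add: P0_mixing_gap[OF E F])
qed simp

theorem theorem8:
  shows "distr P0 Omega0 T0 = P0 \<and>
         psi_mixing P0 \<and>
         (\<lambda>n. measure P0 (cyl (\<lambda>_. True) (Suc n) \<inter> cyl (\<lambda>_. True) n)
                / measure P0 (cyl (\<lambda>_. True) n)) \<longlonglongrightarrow> 0"
  using P0_shift_invariant P0_psi_mixing P0_all_ones_conditional by blast

end
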